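(* With notation as in the context (type $E_7$), let $x_1,x_2\in\Gamma_7^+$ with $x_1\neq x_2$. If $(x_1|x_2)=0$, then there exists a unique $x_3\in\Gamma_7^+\setminus\{x_1,x_2\}$ such that $(x_1|x_3)=(x_2|x_3)=0$; moreover this $x_3$ satisfies $x_1\oplus x_2\oplus x_3=000$. Conversely, if $x_1\oplus x_2\in\Gamma_7^+$, then $(x_1|x_2)=0$.
   Context: Let $F=\{0,1,2,3\}$ be the group $\mathbb{Z}/2\times\mathbb{Z}/2$ with operation $\oplus$ (binary addition without carry) and symplectic form $(a|a')=0$ if $a=0$, $a'=0$ or $a=a'$, and $1$ otherwise. Let $V=F^3$ (elements written $abc$), with coordinatewise $\oplus$ and form $(abc|a'b'c')=(a|a')+(b|b')+(c|c')\in\mathbb{Z}/2$. Let $\Delta$ be the $E_7$ root system with simple roots $\alpha_1,\dots,\alpha_7$, $\langle\alpha_i,\alpha_i\rangle=2$, $\langle\alpha_i,\alpha_j\rangle=-1$ for $\{i,j\}\in\{\{1,3\},\{3,4\},\{4,5\},\{5,6\},\{6,7\},\{2,4\}\}$, $0$ otherwise; $\Lambda=\bigoplus\mathbb{Z}\alpha_i$, $\Delta^+$ the positive roots. Let $f:\Lambda\to V$ be the homomorphism with $f(\alpha_1)=100$, $f(\alpha_2)=030$, $f(\alpha_3)=300$, $f(\alpha_4)=111$, $f(\alpha_5)=003$, $f(\alpha_6)=001$, $f(\alpha_7)=033$. Let $\Delta_7^+$ be the positive roots with nonzero $\alpha_7$-coefficient and $\Gamma_7^+=f(\Delta_7^+)$.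 *)

theory Defs
  imports Main
begin

(* F = {0,1,2,3} = Z/2 x Z/2, elements as nat, operation = bitwise xor *)
type_synonym vec = "nat \<times> nat \<times> nat"   (* V = F^3, element abc = (a,b,c) *)

definition formF :: "nat \<Rightarrow> nat \<Rightarrow> nat" where
  "formF a a' = (if a = 0 \<or> a' = 0 \<or> a = a' then 0 else 1)"

definition vxor :: "vec \<Rightarrow> vec \<Rightarrow> vec" where
  "vxor x y = (xor (fst x) (fst y), xor (fst (snd x)) (fst (snd y)), xor (snd (snd x)) (snd (snd y)))"

definition formV :: "vec \<Rightarrow> vec \<Rightarrow> nat" where
  "formV x y = (formF (fst x) (fst y) + formF (fst (snd x)) (fst (snd y))
       + formF (snd (snd x)) (snd (snd y))) mod 2"

definition e7_edge :: "nat \<Rightarrow> nat \<Rightarrow> bool" where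
  "e7_edge i j = ({i,j} \<in> {{1,3},{3,4},{4,5},{5,6},{6,7},{2,4}})"

definition cartan :: "nat \<Rightarrow> nat \<Rightarrow> int" where
  "cartan i j = (if i = j then 2 else if e7_edge i j then -1 else 0)"

(* elements of Lambda: coefficient functions supported on {1..7} *)
definition lattice :: "(nat \<Rightarrow> int) set" where
  "lattice = {c. \<forall>i. i \<notin> {1..7} \<longrightarrow> c i = 0}"

definition lform :: "(nat \<Rightarrow> int) \<Rightarrow> (nat \<Rightarrow> int) \<Rightarrow> int" where
  "lform c d = (\<Sum>i\<in>{1..7}. \<Sum>j\<in>{1..7}. c i * d j * cartan i j)"

definition roots :: "(nat \<Rightarrow> int) set" where
  "roots = {c \<in> lattice. lform c c = 2}"

definition pos_roots :: "(nat \<Rightarrow> int) set" where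
  "pos_roots = {c \<in> roots. \<forall>i. c i \<ge> 0}"

definition f_simple :: "nat \<Rightarrow> vec" where
  "f_simple i = (if i = 1 then (1,0,0) else if i = 2 then (0,3,0) else if i = 3 then (3,0,0)
     else if i = 4 then (1,1,1) else if i = 5 then (0,0,3) else if i = 6 then (0,0,1)
     else if i = 7 then (0,3,3) else (0,0,0))"

(* the homomorphism f : Lambda -> V; V has exponent 2, so f(sum c_i alpha_i) is the
   xor of f(alpha_i) over i with c_i odd *)
definition fhom :: "(nat \<Rightarrow> int) \<Rightarrow> vec" where
  "fhom c = foldr (\<lambda>i acc. if odd (c i) then vxor (f_simple i) acc else acc) [1..<8] (0,0,0)"

definition Delta7_pos :: "(nat \<Rightarrow> int) set" where
  "Delta7_pos = {c \<in> pos_roots. c 7 \<noteq> 0}"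

definition Gamma7_pos :: "vec set" where
  "Gamma7_pos = fhom ` Delta7_pos"

end

theory Submission
  imports Defs
begin

(* The form (c|c) is positive definite, and Cauchy-Schwarz against the fundamental weights gives
   c_k^2 <= (A^-1)_kk (c|c) for the Cartan matrix A.  For a positive root this bounds c_1, ..., c_7
   by the coefficients 2,2,3,4,3,2,1 of the highest root, so Delta7_pos is found by a finite
   search: it consists of 27 roots, all with c_7 = 1, and f maps them bijectively onto the 27
   vectors of V having exactly one zero coordinate.  On that set both claims are a finite check;
   for an orthogonal pair the third vector is vxor x1 x2. *)

definition e7_norm :: "(nat \<Rightarrow> int) \<Rightarrow> int" where
  "e7_norm c = 2 * (c 1 ^ 2 + c 2 ^ 2 + c 3 ^ 2 + c 4 ^ 2 + c 5 ^ 2 + c 6 ^ 2 + c 7 ^ 2)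
     - 2 * (c 1 * c 3 + c 3 * c 4 + c 4 * c 5 + c 5 * c 6 + c 6 * c 7 + c 2 * c 4)"

lemma lform_diag_eq_e7_norm: "lform c c = e7_norm c"
proof -
  have "{1..7::nat} = {1, 2, 3, 4, 5, 6, 7}" by auto
  then show ?thesis
    by (simp add: lform_def cartan_def e7_edge_def e7_norm_def doubleton_eq_iff
        power2_eq_square algebra_simps)
qed

lemma coeff_square_le_e7_norm:
  "c 1 ^ 2 \<le> 2 * e7_norm c \<and> 2 * c 2 ^ 2 \<le> 7 * e7_norm c
    \<and> c 3 ^ 2 \<le> 6 * e7_norm c \<and> c 4 ^ 2 \<le> 12 * e7_norm c
    \<and> 2 * c 5 ^ 2 \<le> 15 * e7_norm c \<and> c 6 ^ 2 \<le> 4 * e7_norm c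
    \<and> 2 * c 7 ^ 2 \<le> 3 * e7_norm c"
proof -
  \<comment> \<open>each right-hand side is the LDL decomposition of the semidefinite form
    (A^-1)_kk (c|c) - c_k^2, scaled to integer coefficients\<close>
  have sos:
    "2 * (2 * e7_norm c - c 1 ^ 2) = 2 * (2 * c 2 - c 4) ^ 2 + 2 * (-c 1 + 2 * c 3 - c 4) ^ 2
       + (-c 1 + 2 * c 4 - 2 * c 5) ^ 2 + (-c 1 + 2 * c 5 - 2 * c 6) ^ 2
       + (-c 1 + 2 * c 6 - 2 * c 7) ^ 2 + (-c 1 + 2 * c 7) ^ 2"
    "60 * (7 * e7_norm c - 2 * c 2 ^ 2) = 210 * (2 * c 1 - c 3) ^ 2 + 70 * (3 * c 3 - 2 * c 4) ^ 2
       + 35 * (-3 * c 2 + 4 * c 4 - 3 * c 5) ^ 2 + 21 * (-3 * c 2 + 5 * c 5 - 4 * c 6) ^ 2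
       + 14 * (-3 * c 2 + 6 * c 6 - 5 * c 7) ^ 2 + 10 * (-3 * c 2 + 7 * c 7) ^ 2"
    "10 * (6 * e7_norm c - c 3 ^ 2) = 30 * (2 * c 1 - c 3) ^ 2 + 30 * (2 * c 2 - c 4) ^ 2
       + 10 * (-2 * c 3 + 3 * c 4 - 2 * c 5) ^ 2 + 5 * (-2 * c 3 + 4 * c 5 - 3 * c 6) ^ 2
       + 3 * (-2 * c 3 + 5 * c 6 - 4 * c 7) ^ 2 + 8 * (-c 3 + 3 * c 7) ^ 2"
    "12 * e7_norm c - c 4 ^ 2 = 6 * (2 * c 1 - c 3) ^ 2 + 6 * (2 * c 2 - c 4) ^ 2
       + 2 * (3 * c 3 - 2 * c 4) ^ 2 + 6 * (-c 4 + 2 * c 5 - c 6) ^ 2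
       + 2 * (-c 4 + 3 * c 6 - 2 * c 7) ^ 2 + (-c 4 + 4 * c 7) ^ 2"
    "2 * (15 * e7_norm c - 2 * c 5 ^ 2) = 15 * (2 * c 1 - c 3) ^ 2 + 15 * (2 * c 2 - c 4) ^ 2
       + 5 * (3 * c 3 - 2 * c 4) ^ 2 + (5 * c 4 - 6 * c 5) ^ 2
       + 15 * (-c 5 + 2 * c 6 - c 7) ^ 2 + 5 * (-c 5 + 3 * c 7) ^ 2"
    "15 * (4 * e7_norm c - c 6 ^ 2) = 30 * (2 * c 1 - c 3) ^ 2 + 30 * (2 * c 2 - c 4) ^ 2
       + 10 * (3 * c 3 - 2 * c 4) ^ 2 + 2 * (5 * c 4 - 6 * c 5) ^ 2
       + 3 * (4 * c 5 - 5 * c 6) ^ 2 + 30 * (-c 6 + 2 * c 7) ^ 2"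
    "20 * (3 * e7_norm c - 2 * c 7 ^ 2) = 30 * (2 * c 1 - c 3) ^ 2 + 30 * (2 * c 2 - c 4) ^ 2
       + 10 * (3 * c 3 - 2 * c 4) ^ 2 + 2 * (5 * c 4 - 6 * c 5) ^ 2
       + 3 * (4 * c 5 - 5 * c 6) ^ 2 + 5 * (3 * c 6 - 4 * c 7) ^ 2"
    unfolding e7_norm_def by (simp_all add: power2_eq_square algebra_simps)
  have "0 \<le> 2 * (2 * e7_norm c - c 1 ^ 2)" "0 \<le> 60 * (7 * e7_norm c - 2 * c 2 ^ 2)"
    "0 \<le> 10 * (6 * e7_norm c - c 3 ^ 2)" "0 \<le> 12 * e7_norm c - c 4 ^ 2"
    "0 \<le> 2 * (15 * e7_norm c - 2 * c 5 ^ 2)" "0 \<le> 15 * (4 * e7_norm c - c 6 ^ 2)"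
    "0 \<le> 20 * (3 * e7_norm c - 2 * c 7 ^ 2)"
    unfolding sos by simp_all
  then show ?thesis by simp
qed

lemma pos_root_coeff_le:
  assumes "c \<in> pos_roots"
  shows "c 1 \<le> 2 \<and> c 2 \<le> 2 \<and> c 3 \<le> 3 \<and> c 4 \<le> 4 \<and> c 5 \<le> 3 \<and> c 6 \<le> 2 \<and> c 7 \<le> 1"
proof -
  have norm: "e7_norm c = 2"
    using assms by (simp add: pos_roots_def roots_def lform_diag_eq_e7_norm)
  have less_of_square_less: "c i < b" if "c i ^ 2 < b ^ 2" "0 \<le> b" for i and b :: int
    using power_less_imp_less_base that by blast
  have "c 1 < 3" "c 2 < 3" "c 3 < 4" "c 4 < 5" "c 5 < 4" "c 6 < 3" "c 7 < 2"
    using coeff_square_le_e7_norm[of c] by (intro less_of_square_less; simp add: norm)+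
  then show ?thesis by simp
qed

definition of_coeff_list :: "int list \<Rightarrow> nat \<Rightarrow> int" where
  "of_coeff_list xs i = (if 1 \<le> i \<and> i \<le> length xs then xs ! (i - 1) else 0)"

lemma of_coeff_list_in_lattice: "length xs = 7 \<Longrightarrow> of_coeff_list xs \<in> lattice"
  by (simp add: of_coeff_list_def lattice_def)

lemma of_coeff_list_nonneg: "\<forall>x\<in>set xs. 0 \<le> x \<Longrightarrow> 0 \<le> of_coeff_list xs i"
  by (auto simp: of_coeff_list_def)

lemma of_coeff_list_map_coeffs: "c \<in> lattice \<Longrightarrow> of_coeff_list (map c [1..<8]) = c"
  by (rule ext) (auto simp: of_coeff_list_def lattice_def)

definition Delta7_pos_coeffs :: "int list list" where
  "Delta7_pos_coeffs =
    [[0,0,0,0,0,0,1], [0,0,0,0,0,1,1], [0,0,0,0,1,1,1], [0,0,0,1,1,1,1], [0,0,1,1,1,1,1],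
     [0,1,0,1,1,1,1], [0,1,1,1,1,1,1], [0,1,1,2,1,1,1], [0,1,1,2,2,1,1], [0,1,1,2,2,2,1],
     [1,0,1,1,1,1,1], [1,1,1,1,1,1,1], [1,1,1,2,1,1,1], [1,1,1,2,2,1,1], [1,1,1,2,2,2,1],
     [1,1,2,2,1,1,1], [1,1,2,2,2,1,1], [1,1,2,2,2,2,1], [1,1,2,3,2,1,1], [1,1,2,3,2,2,1],
     [1,1,2,3,3,2,1], [1,2,2,3,2,1,1], [1,2,2,3,2,2,1], [1,2,2,3,3,2,1], [1,2,2,4,3,2,1],
     [1,2,3,4,3,2,1], [2,2,3,4,3,2,1]]"

lemma e7_norm_2_in_Delta7_pos_coeffs:
  "\<forall>a1\<in>set [0..2]. \<forall>a2\<in>set [0..2]. \<forall>a3\<in>set [0..3]. \<forall>a4\<in>set [0..4]. \<forall>a5\<in>set [0..3].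
   \<forall>a6\<in>set [0..2]. e7_norm (of_coeff_list [a1, a2, a3, a4, a5, a6, 1]) = 2
     \<longrightarrow> [a1, a2, a3, a4, a5, a6, 1] \<in> set Delta7_pos_coeffs"
  by code_simp

lemma Delta7_pos_coeffs_are_roots:
  "\<forall>xs\<in>set Delta7_pos_coeffs. length xs = 7 \<and> (\<forall>x\<in>set xs. 0 \<le> x)
     \<and> e7_norm (of_coeff_list xs) = 2 \<and> of_coeff_list xs 7 \<noteq> 0"
  by code_simp

lemma Delta7_pos_eq: "Delta7_pos = of_coeff_list ` set Delta7_pos_coeffs"
proof (intro equalityI subsetI)
  fix c assume "c \<in> Delta7_pos"
  then have c: "c \<in> pos_roots" "c \<in> lattice" "e7_norm c = 2" "c 7 \<noteq> 0" "\<forall>i. 0 \<le> c i"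
    by (auto simp: Delta7_pos_def pos_roots_def roots_def lform_diag_eq_e7_norm)
  have c7: "c 7 = 1" using pos_root_coeff_le[OF c(1)] c(4) spec[OF c(5), of 7] by linarith
  have c_eq: "of_coeff_list [c 1, c 2, c 3, c 4, c 5, c 6, 1] = c"
    using of_coeff_list_map_coeffs[OF c(2)] c7 by (simp add: upt_rec eval_nat_numeral)
  have "[c 1, c 2, c 3, c 4, c 5, c 6, 1] \<in> set Delta7_pos_coeffs"
    by (rule e7_norm_2_in_Delta7_pos_coeffs[rule_format])
      (use pos_root_coeff_le[OF c(1)] c(3,5) c_eq in simp_all)
  then show "c \<in> of_coeff_list ` set Delta7_pos_coeffs"
    using c_eq by force
next
  fix c assume "c \<in> of_coeff_list ` set Delta7_pos_coeffs"
  then obtain xs where "xs \<in> set Delta7_pos_coeffs" and "c = of_coeff_list xs" by blast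
  then show "c \<in> Delta7_pos"
    using Delta7_pos_coeffs_are_roots of_coeff_list_in_lattice of_coeff_list_nonneg
    by (simp add: Delta7_pos_def pos_roots_def roots_def lform_diag_eq_e7_norm)
qed

definition weight_two_vectors :: "vec list" where
  "weight_two_vectors = [(0, b, c). b \<leftarrow> [1..<4], c \<leftarrow> [1..<4]]
     @ [(a, 0, c). a \<leftarrow> [1..<4], c \<leftarrow> [1..<4]] @ [(a, b, 0). a \<leftarrow> [1..<4], b \<leftarrow> [1..<4]]"

lemma Gamma7_pos_eq: "Gamma7_pos = set weight_two_vectors"
proof -
  have "Gamma7_pos = set (map (fhom \<circ> of_coeff_list) Delta7_pos_coeffs)"
    by (simp add: Gamma7_pos_def Delta7_pos_eq image_image)
  also have "\<dots> = set weight_two_vectors"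
    by code_simp
  finally show ?thesis .
qed

lemma weight_two_common_orthogonal:
  "\<forall>x1\<in>set weight_two_vectors. \<forall>x2\<in>set weight_two_vectors. x1 \<noteq> x2 \<and> formV x1 x2 = 0 \<longrightarrow>
     filter (\<lambda>y. y \<noteq> x1 \<and> y \<noteq> x2 \<and> formV x1 y = 0 \<and> formV x2 y = 0) weight_two_vectors
       = [vxor x1 x2]"
  by code_simp

lemma weight_two_sum_imp_orthogonal:
  "\<forall>x1\<in>set weight_two_vectors. \<forall>x2\<in>set weight_two_vectors.
     vxor x1 x2 \<in> set weight_two_vectors \<longrightarrow> formV x1 x2 = 0"
  by code_simp

lemma vxor_self: "vxor x x = (0, 0, 0)"
  by (simp add: vxor_def)

lemma Gamma7_pos_common_orthogonal:
  assumes "x1 \<in> Gamma7_pos" "x2 \<in> Gamma7_pos" "x1 \<noteq> x2" "formV x1 x2 = 0"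
  shows "y \<in> Gamma7_pos - {x1, x2} \<and> formV x1 y = 0 \<and> formV x2 y = 0 \<longleftrightarrow> y = vxor x1 x2"
proof -
  have "filter (\<lambda>y. y \<noteq> x1 \<and> y \<noteq> x2 \<and> formV x1 y = 0 \<and> formV x2 y = 0) weight_two_vectors
      = [vxor x1 x2]"
    using weight_two_common_orthogonal assms unfolding Gamma7_pos_eq by blast
  then have "y \<in> set (filter (\<lambda>y. y \<noteq> x1 \<and> y \<noteq> x2 \<and> formV x1 y = 0 \<and> formV x2 y = 0)
      weight_two_vectors) \<longleftrightarrow> y = vxor x1 x2"
    by simp
  then show ?thesis
    unfolding Gamma7_pos_eq by auto
qed

lemma Gamma7_pos_sum_imp_orthogonal:
  "x1 \<in> Gamma7_pos \<Longrightarrow> x2 \<in> Gamma7_pos \<Longrightarrow> vxor x1 x2 \<in> Gamma7_pos \<Longrightarrow> formV x1 x2 = 0"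
  using weight_two_sum_imp_orthogonal unfolding Gamma7_pos_eq by blast

theorem mainTheorem9:
  assumes "x1 \<in> Gamma7_pos" and "x2 \<in> Gamma7_pos" and "x1 \<noteq> x2"
  shows "(formV x1 x2 = 0 \<longrightarrow>
           (\<exists>x3. x3 \<in> Gamma7_pos - {x1, x2} \<and> formV x1 x3 = 0 \<and> formV x2 x3 = 0
              \<and> vxor (vxor x1 x2) x3 = (0,0,0)
              \<and> (\<forall>y. y \<in> Gamma7_pos - {x1, x2} \<and> formV x1 y = 0 \<and> formV x2 y = 0 \<longrightarrow> y = x3)))
       \<and> (vxor x1 x2 \<in> Gamma7_pos \<longrightarrow> formV x1 x2 = 0)"
  using Gamma7_pos_common_orthogonal[OF assms] Gamma7_pos_sum_imp_orthogonal[OF assms(1,2)]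
  by (intro conjI impI exI[of _ "vxor x1 x2"]) (blast intro: vxor_self)+

end
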